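(* Let $T_1,T_2$ be two trees. Every minimum and minimal isometric-universal graph for $\{T_1,T_2\}$ is a tree.
   Context: Graphs are finite, simple and undirected. $\mathrm{dist}_G(u,v)$ denotes the number of edges of a shortest $u$–$v$ path in $G$ ($\infty$ if none exists). A subgraph $H$ of $G$ is an isometric subgraph if $\mathrm{dist}_H(u,v)=\mathrm{dist}_G(u,v)$ for all vertices $u,v$ of $H$. A graph $\mathcal U$ is an isometric-universal graph for a family $\mathcal F$ of graphs if every graph of $\mathcal F$ is isomorphic to an isometric subgraph of $\mathcal U$. It is minimum if it has the smallest possible number of vertices among all isometric-universal graphs for $\mathcal F$, and it is minimal if no proper subgraph of $\mathcal U$ is an isometric-universal graph for $\mathcal F$. *)

theory Defs
  imports Main "HOL-Library.Extended_Nat"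
begin

type_synonym 'a graph = "'a set \<times> 'a set set"

definition verts :: "'a graph \<Rightarrow> 'a set" where "verts G = fst G"
definition edges :: "'a graph \<Rightarrow> 'a set set" where "edges G = snd G"

definition graph :: "'a graph \<Rightarrow> bool" where
  "graph G \<longleftrightarrow> finite (verts G) \<and> (\<forall>e\<in>edges G. card e = 2 \<and> e \<subseteq> verts G)"

definition walk :: "'a graph \<Rightarrow> 'a list \<Rightarrow> bool" where
  "walk G xs \<longleftrightarrow> xs \<noteq> [] \<and> set xs \<subseteq> verts G \<and>
     (\<forall>i. Suc i < length xs \<longrightarrow> {xs ! i, xs ! Suc i} \<in> edges G)"

text \<open>Distance: number of edges of a shortest u-v walk (= shortest path); infinity if none.\<close>
definition dist :: "'a graph \<Rightarrow> 'a \<Rightarrow> 'a \<Rightarrow> enat" where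
  "dist G u v = (INF xs \<in> {xs. walk G xs \<and> hd xs = u \<and> last xs = v}. enat (length xs - 1))"

definition connected :: "'a graph \<Rightarrow> bool" where
  "connected G \<longleftrightarrow> (\<forall>u\<in>verts G. \<forall>v\<in>verts G. dist G u v < \<infinity>)"

definition cycle :: "'a graph \<Rightarrow> 'a list \<Rightarrow> bool" where
  "cycle G xs \<longleftrightarrow> walk G xs \<and> length xs \<ge> 3 \<and> distinct xs \<and> {last xs, hd xs} \<in> edges G"

definition tree :: "'a graph \<Rightarrow> bool" where
  "tree G \<longleftrightarrow> graph G \<and> verts G \<noteq> {} \<and> connected G \<and> \<not> (\<exists>xs. cycle G xs)"

definition subgraph :: "'a graph \<Rightarrow> 'a graph \<Rightarrow> bool" where
  "subgraph H G \<longleftrightarrow> graph H \<and> graph G \<and> verts H \<subseteq> verts G \<and> edges H \<subseteq> edges G"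

definition isometric_subgraph :: "'a graph \<Rightarrow> 'a graph \<Rightarrow> bool" where
  "isometric_subgraph H G \<longleftrightarrow> subgraph H G \<and>
     (\<forall>u\<in>verts H. \<forall>v\<in>verts H. dist H u v = dist G u v)"

definition graph_iso :: "'b graph \<Rightarrow> 'a graph \<Rightarrow> ('b \<Rightarrow> 'a) \<Rightarrow> bool" where
  "graph_iso G H f \<longleftrightarrow> bij_betw f (verts G) (verts H) \<and>
     (\<forall>u\<in>verts G. \<forall>v\<in>verts G. {u, v} \<in> edges G \<longleftrightarrow> {f u, f v} \<in> edges H)"

definition isomorphic :: "'b graph \<Rightarrow> 'a graph \<Rightarrow> bool" where
  "isomorphic G H \<longleftrightarrow> (\<exists>f. graph_iso G H f)"

definition isometric_universal :: "'b graph set \<Rightarrow> 'a graph \<Rightarrow> bool" where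
  "isometric_universal F U \<longleftrightarrow> graph U \<and>
     (\<forall>G\<in>F. \<exists>H. isometric_subgraph H U \<and> isomorphic G H)"

text \<open>Minimum: fewest vertices among all isometric-universal graphs. Every finite graph
is isomorphic to one on vertex type nat, so comparing with graphs on nat is comparing
with all finite graphs.\<close>
definition minimum_isometric_universal :: "'b graph set \<Rightarrow> 'a graph \<Rightarrow> bool" where
  "minimum_isometric_universal F U \<longleftrightarrow> isometric_universal F U \<and>
     (\<forall>H :: nat graph. isometric_universal F H \<longrightarrow> card (verts U) \<le> card (verts H))"

definition minimal_isometric_universal :: "'b graph set \<Rightarrow> 'a graph \<Rightarrow> bool" where
  "minimal_isometric_universal F U \<longleftrightarrow> isometric_universal F U \<and>
     \<not> (\<exists>H. subgraph H U \<and> H \<noteq> U \<and> isometric_universal F H)"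

end

(* Let H1, H2 be isometric copies of T1, T2 in U. Minimality of U forces U = H1 \<union> H2.
   Call y \<in> H1 - H2 and x \<in> H2 - H1 twins if they have the same distances to all common
   vertices. Trees are injective metric spaces: nonexpansive maps into a tree extend from any
   subset, because balls in a tree have the Helly property. Hence twins can be identified
   while both copies stay isometric, which gives a universal graph with fewer vertices; so a
   minimum U has no twins. Without twins the copies share a vertex a, and a vertex of
   H2 - H1 farthest from a is a leaf of H2, since a further neighbour would yield a twin on
   a geodesic of H1. Removing such leaves one by one shows that H1 \<union> H2 is a tree. *)

theory Submission
  imports Defs
begin

section \<open>Walks and distances\<close>

lemma walk_single [simp]: "walk G [x] \<longleftrightarrow> x \<in> verts G"
  by (auto simp: walk_def)

lemma walk_Cons_Cons:
  "walk G (x # y # xs) \<longleftrightarrow> x \<in> verts G \<and> {x, y} \<in> edges G \<and> walk G (y # xs)"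
proof
  assume w: "walk G (x # y # xs)"
  have "{(y # xs) ! i, (y # xs) ! Suc i} \<in> edges G" if "Suc i < length (y # xs)" for i
    using w that unfolding walk_def by (metis Suc_less_eq length_Cons nth_Cons_Suc)
  moreover have "{x, y} \<in> edges G"
    using w unfolding walk_def by (metis length_Cons nth_Cons_0 nth_Cons_Suc zero_less_Suc Suc_less_eq)
  ultimately show "x \<in> verts G \<and> {x, y} \<in> edges G \<and> walk G (y # xs)"
    using w unfolding walk_def by auto
next
  assume h: "x \<in> verts G \<and> {x, y} \<in> edges G \<and> walk G (y # xs)"
  have "{(x # y # xs) ! i, (x # y # xs) ! Suc i} \<in> edges G" if "Suc i < length (x # y # xs)" for i
    using h that unfolding walk_def by (cases i) auto
  then show "walk G (x # y # xs)"
    using h unfolding walk_def by auto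
qed

lemma walk_append: "walk G xs \<Longrightarrow> walk G ys \<Longrightarrow> last xs = hd ys \<Longrightarrow> walk G (xs @ tl ys)"
proof (induction xs rule: induct_list012)
  case 1
  then show ?case by (simp add: walk_def)
next
  case (2 x)
  then show ?case by (cases ys) auto
next
  case (3 x y zs)
  then show ?case by (auto simp: walk_Cons_Cons)
qed

lemma walk_rev: "walk G xs \<Longrightarrow> walk G (rev xs)"
proof (induction xs rule: induct_list012)
  case 1
  then show ?case by (simp add: walk_def)
next
  case (2 x)
  then show ?case by simp
next
  case (3 x y zs)
  then have "walk G (rev (y # zs))" "{x, y} \<in> edges G" "x \<in> verts G"
    by (auto simp: walk_Cons_Cons)
  then have "walk G (rev (y # zs))" and "walk G [y, x]"
    by (auto simp: walk_Cons_Cons insert_commute walk_def)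
  from walk_append[OF this] show ?case by simp
qed

lemma walk_take: "walk G xs \<Longrightarrow> 0 < k \<Longrightarrow> walk G (take k xs)"
  unfolding walk_def by (auto dest: in_set_takeD)

lemma walk_drop: "walk G xs \<Longrightarrow> k < length xs \<Longrightarrow> walk G (drop k xs)"
  unfolding walk_def by (auto dest: in_set_dropD)

lemma walk_mono: "verts G \<subseteq> verts H \<Longrightarrow> edges G \<subseteq> edges H \<Longrightarrow> walk G xs \<Longrightarrow> walk H xs"
  unfolding walk_def by blast

lemma dist_le_length: "walk G xs \<Longrightarrow> dist G (hd xs) (last xs) \<le> enat (length xs - 1)"
  unfolding dist_def by (rule INF_lower2[of xs]) auto

lemma obtain_shortest_walk:
  assumes "dist G u v \<noteq> \<infinity>"
  obtains xs where "walk G xs" "hd xs = u" "last xs = v" "dist G u v = enat (length xs - 1)"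
proof -
  let ?W = "{xs. walk G xs \<and> hd xs = u \<and> last xs = v}"
  let ?len = "\<lambda>xs. enat (length xs - 1)"
  have "?W \<noteq> {}"
  proof
    assume "?W = {}"
    then show False
      using assms unfolding dist_def by (simp add: Inf_enat_def)
  qed
  then obtain xs0 where "xs0 \<in> ?W" by blast
  then have "Inf (?len ` ?W) \<in> ?len ` ?W"
    by (intro wellorder_InfI) auto
  then show ?thesis
    using that unfolding dist_def by auto
qed

lemma dist_self: "u \<in> verts G \<Longrightarrow> dist G u u = 0"
  using dist_le_length[of G "[u]"] by (simp add: enat_0)

lemma dist_eq_0D:
  assumes "dist G u v = 0"
  shows "u = v"
proof (rule obtain_shortest_walk[of G u v])
  show "dist G u v \<noteq> \<infinity>" using assms by simp
  fix xs assume "walk G xs" "hd xs = u" "last xs = v" "dist G u v = enat (length xs - 1)"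
  then show "u = v" using assms by (cases xs) (auto simp: zero_enat_def walk_def)
qed

lemma dist_commute: "dist G u v = dist G v u"
proof -
  have le: "dist G v u \<le> dist G u v" for u v
  proof (cases "dist G u v = \<infinity>")
    case False
    then obtain xs where "walk G xs" "hd xs = u" "last xs = v" "dist G u v = enat (length xs - 1)"
      by (rule obtain_shortest_walk)
    moreover from this have "xs \<noteq> []" by (simp add: walk_def)
    ultimately show ?thesis
      using dist_le_length[OF walk_rev] by (metis hd_rev last_rev length_rev)
  qed simp
  show ?thesis using le[of u v] le[of v u] by simp
qed

lemma dist_triangle: "dist G u w \<le> dist G u v + dist G v w"
proof (cases "dist G u v = \<infinity> \<or> dist G v w = \<infinity>")
  case False
  then obtain xs ys where
    xs: "walk G xs" "hd xs = u" "last xs = v" "dist G u v = enat (length xs - 1)" and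
    ys: "walk G ys" "hd ys = v" "last ys = w" "dist G v w = enat (length ys - 1)"
    by (metis obtain_shortest_walk)
  have ne: "xs \<noteq> []" "ys \<noteq> []" using xs ys by (auto simp: walk_def)
  have "hd (xs @ tl ys) = u" using ne xs by simp
  moreover have "last (xs @ tl ys) = w"
    using ne xs ys by (cases ys) (auto simp: last_append)
  moreover have "length (xs @ tl ys) - 1 = (length xs - 1) + (length ys - 1)"
    using ne by (cases xs; cases ys) auto
  ultimately have "dist G u w \<le> enat ((length xs - 1) + (length ys - 1))"
    using dist_le_length[OF walk_append[OF xs(1) ys(1)]] xs ys by simp
  then show ?thesis using xs(4) ys(4) by simp
qed auto

lemma dist_antimono:
  "verts G \<subseteq> verts H \<Longrightarrow> edges G \<subseteq> edges H \<Longrightarrow> dist H u v \<le> dist G u v"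
  unfolding dist_def by (rule INF_superset_mono) (auto intro: walk_mono)

lemma graph_edgeD: "graph G \<Longrightarrow> {u, v} \<in> edges G \<Longrightarrow> u \<in> verts G \<and> v \<in> verts G \<and> u \<noteq> v"
  unfolding graph_def by (cases "u = v") auto

lemma graph_edgeE:
  assumes "graph G" "e \<in> edges G"
  obtains u v where "e = {u, v}" "u \<in> verts G" "v \<in> verts G" "u \<noteq> v"
  using assms unfolding graph_def by (metis card_2_iff insert_subset)

lemma graph_eqI: "verts G = verts H \<Longrightarrow> edges G = edges H \<Longrightarrow> G = H"
  by (simp add: verts_def edges_def prod_eq_iff)

lemma dist_le_1_iff:
  assumes "graph G" "u \<in> verts G"
  shows "dist G u v \<le> 1 \<longleftrightarrow> u = v \<or> {u, v} \<in> edges G"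
proof
  assume le: "dist G u v \<le> 1"
  then have "dist G u v \<noteq> \<infinity>" by (metis infinity_ileE one_enat_def)
  then obtain xs where xs: "walk G xs" "hd xs = u" "last xs = v" "dist G u v = enat (length xs - 1)"
    by (rule obtain_shortest_walk)
  moreover have "xs \<noteq> []" using xs by (simp add: walk_def)
  moreover have "length xs - 1 \<le> 1" using xs le by (simp add: one_enat_def)
  ultimately consider "xs = [u]" | "xs = [u, v]"
    by (cases xs rule: remdups_adj.cases) auto
  then show "u = v \<or> {u, v} \<in> edges G"
    using xs by cases (auto simp: walk_Cons_Cons)
next
  assume "u = v \<or> {u, v} \<in> edges G"
  then show "dist G u v \<le> 1"
  proof
    assume "{u, v} \<in> edges G"
    then have "walk G [u, v]" using assms graph_edgeD[OF assms(1)] by (auto simp: walk_Cons_Cons)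
    then show ?thesis using dist_le_length[of G "[u, v]"] by (simp add: one_enat_def)
  next
    assume "u = v"
    then show ?thesis using dist_self[OF assms(2)] by simp
  qed
qed

lemma dist_map_le:
  assumes "\<And>x. x \<in> verts G \<Longrightarrow> f x \<in> verts H"
    and "\<And>x y. {x, y} \<in> edges G \<Longrightarrow> f x = f y \<or> {f x, f y} \<in> edges H"
    and "graph H"
  shows "dist H (f u) (f v) \<le> dist G u v"
proof -
  have "dist H (f (hd xs)) (f (last xs)) \<le> enat (length xs - 1)" if "walk G xs" for xs
    using that
  proof (induction xs rule: induct_list012)
    case (2 x)
    then show ?case using assms(1) by (simp add: dist_self)
  next
    case (3 x y zs)
    then have xy: "{x, y} \<in> edges G" "walk G (y # zs)" "f x \<in> verts H"
      using assms(1) by (auto simp: walk_Cons_Cons)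
    then have "dist H (f x) (f y) \<le> 1"
      using dist_le_1_iff[OF assms(3) xy(3)] assms(2)[OF xy(1)] by blast
    moreover have "dist H (f y) (f (last (y # zs))) \<le> enat (length zs)"
      using "3.IH"(2) xy(2) by simp
    ultimately have "dist H (f x) (f (last (y # zs))) \<le> 1 + enat (length zs)"
      using dist_triangle[of H "f x" _ "f y"] add_mono order_trans by blast
    then show ?case by (simp add: one_enat_def)
  qed (simp add: walk_def)
  then show ?thesis unfolding dist_def[of G] by (intro INF_greatest) auto
qed

lemma isometric_subgraph_trans:
  assumes "isometric_subgraph H G" "isometric_subgraph G U"
  shows "isometric_subgraph H U"
  using assms unfolding isometric_subgraph_def subgraph_def
  by (simp add: subset_iff)

lemma isometric_subgraph_between:
  assumes "isometric_subgraph H U" "subgraph H G" "subgraph G U"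
  shows "isometric_subgraph H G"
  unfolding isometric_subgraph_def
proof (intro conjI ballI)
  fix u v assume uv: "u \<in> verts H" "v \<in> verts H"
  have "dist G u v \<le> dist H u v" "dist U u v \<le> dist G u v"
    using assms(2,3) unfolding subgraph_def by (simp_all add: dist_antimono)
  then show "dist H u v = dist G u v"
    using assms(1) uv unfolding isometric_subgraph_def by (simp add: order.antisym)
qed (fact assms(2))

lemma dist_agree_if_isometric:
  "isometric_subgraph A U \<Longrightarrow> isometric_subgraph B U \<Longrightarrow> u \<in> verts A \<inter> verts B \<Longrightarrow>
    v \<in> verts A \<inter> verts B \<Longrightarrow> dist A u v = dist B u v"
  by (simp add: isometric_subgraph_def)

lemma isometric_subgraph_if_retraction:
  assumes "subgraph H G"
    and "\<And>x. x \<in> verts G \<Longrightarrow> r x \<in> verts H"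
    and "\<And>x. x \<in> verts H \<Longrightarrow> r x = x"
    and "\<And>x y. {x, y} \<in> edges G \<Longrightarrow> r x = r y \<or> {r x, r y} \<in> edges H"
  shows "isometric_subgraph H G"
  unfolding isometric_subgraph_def
proof (intro conjI ballI)
  fix u v assume uv: "u \<in> verts H" "v \<in> verts H"
  have "dist H (r u) (r v) \<le> dist G u v"
    using assms(1) by (intro dist_map_le assms(2,4)) (auto simp: subgraph_def)
  moreover have "dist G u v \<le> dist H u v"
    using assms(1) unfolding subgraph_def by (simp add: dist_antimono)
  ultimately show "dist H u v = dist G u v"
    using uv assms(3) by (metis antisym)
qed (fact assms(1))

definition graph_union :: "'a graph \<Rightarrow> 'a graph \<Rightarrow> 'a graph" where
  "graph_union A B = (verts A \<union> verts B, edges A \<union> edges B)"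

lemma verts_graph_union [simp]: "verts (graph_union A B) = verts A \<union> verts B"
  and edges_graph_union [simp]: "edges (graph_union A B) = edges A \<union> edges B"
  by (simp_all add: graph_union_def verts_def edges_def)

lemma graph_union_commute: "graph_union A B = graph_union B A"
  by (rule graph_eqI) auto

lemma graph_graph_union: "graph A \<Longrightarrow> graph B \<Longrightarrow> graph (graph_union A B)"
  unfolding graph_def by auto

lemma subgraph_graph_union: "graph A \<Longrightarrow> graph B \<Longrightarrow> subgraph A (graph_union A B)"
  by (simp add: subgraph_def graph_graph_union)

definition nonexpansive :: "'a graph \<Rightarrow> 'b graph \<Rightarrow> 'a set \<Rightarrow> ('a \<Rightarrow> 'b) \<Rightarrow> bool" where
  "nonexpansive G H A f \<longleftrightarrow> f ` A \<subseteq> verts H \<and> (\<forall>x\<in>A. \<forall>y\<in>A. dist H (f x) (f y) \<le> dist G x y)"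

lemma nonexpansiveD:
  assumes "nonexpansive G H A f" "x \<in> A" "y \<in> A"
  shows "f x \<in> verts H" "dist H (f x) (f y) \<le> dist G x y"
  using assms unfolding nonexpansive_def by auto

lemma isometric_subgraph_union_if_nonexpansive:
  assumes A: "graph A" and B: "graph B" and g: "nonexpansive B A (verts B) g"
    and g_id: "\<And>x. x \<in> verts A \<Longrightarrow> x \<in> verts B \<Longrightarrow> g x = x"
  shows "isometric_subgraph A (graph_union A B)"
proof (rule isometric_subgraph_if_retraction)
  define r where "r x = (if x \<in> verts A then x else g x)" for x
  note gB = nonexpansiveD[OF g]
  have r: "r x = g x" if "x \<in> verts B" for x
    using that g_id by (simp add: r_def)
  show "subgraph A (graph_union A B)" by (rule subgraph_graph_union[OF A B])
  show "r x \<in> verts A" if "x \<in> verts (graph_union A B)" for x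
    using that gB by (auto simp: r_def)
  show "r x = x" if "x \<in> verts A" for x
    using that by (simp add: r_def)
  show "r x = r y \<or> {r x, r y} \<in> edges A" if e: "{x, y} \<in> edges (graph_union A B)" for x y
  proof (cases "{x, y} \<in> edges A")
    case True
    then show ?thesis using graph_edgeD[OF A] by (simp add: r_def)
  next
    case False
    then have "{x, y} \<in> edges B" using e by simp
    then have xy: "x \<in> verts B" "y \<in> verts B" "dist B x y \<le> 1"
      using graph_edgeD[OF B] dist_le_1_iff[OF B] by blast+
    then have "dist A (g x) (g y) \<le> 1" using gB(2)[OF xy(1,2)] order_trans by blast
    then show ?thesis using dist_le_1_iff[OF A gB(1)[OF xy(1,1)]] r xy by simp
  qed
qed

section \<open>Relabelling vertices\<close>

definition graph_image :: "('a \<Rightarrow> 'b) \<Rightarrow> 'a graph \<Rightarrow> 'b graph" where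
  "graph_image h G = (h ` verts G, (\<lambda>e. h ` e) ` edges G)"

lemma verts_graph_image [simp]: "verts (graph_image h G) = h ` verts G"
  and edges_graph_image [simp]: "edges (graph_image h G) = (\<lambda>e. h ` e) ` edges G"
  by (simp_all add: graph_image_def verts_def edges_def)

lemma graph_graph_image: "graph G \<Longrightarrow> inj_on h (verts G) \<Longrightarrow> graph (graph_image h G)"
  unfolding graph_def by (auto simp: card_image inj_on_subset)

lemma edge_graph_image: "{x, y} \<in> edges G \<Longrightarrow> {h x, h y} \<in> edges (graph_image h G)"
  unfolding edges_graph_image by (rule image_eqI[where x = "{x, y}"]) auto

lemma edge_graph_image_iff:
  assumes G: "graph G" and inj: "inj_on h (verts G)" and uv: "u \<in> verts G" "v \<in> verts G"
  shows "{h u, h v} \<in> edges (graph_image h G) \<longleftrightarrow> {u, v} \<in> edges G"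
proof
  assume "{h u, h v} \<in> edges (graph_image h G)"
  then obtain e where e: "e \<in> edges G" "h ` {u, v} = h ` e"
    unfolding edges_graph_image by (metis image_empty image_iff image_insert)
  have "e \<subseteq> verts G" using G e(1) by (auto simp: graph_def)
  moreover have "{u, v} \<subseteq> verts G" using uv by simp
  ultimately have "{u, v} = e" using inj_on_image_eq_iff[OF inj] e(2) by metis
  then show "{u, v} \<in> edges G" using e(1) by simp
qed (rule edge_graph_image)

lemma dist_graph_image:
  assumes G: "graph G" and inj: "inj_on h (verts G)" and uv: "u \<in> verts G" "v \<in> verts G"
  shows "dist (graph_image h G) (h u) (h v) = dist G u v"
proof (rule antisym)
  show "dist (graph_image h G) (h u) (h v) \<le> dist G u v"
  proof (rule dist_map_le[OF _ _ graph_graph_image[OF G inj]])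
    show "h x \<in> verts (graph_image h G)" if "x \<in> verts G" for x
      using that by simp
    show "h x = h y \<or> {h x, h y} \<in> edges (graph_image h G)" if "{x, y} \<in> edges G" for x y
      using edge_graph_image[OF that] by (rule disjI2)
  qed
  define k where "k = inv_into (verts G) h"
  have k: "k (h x) = x" if "x \<in> verts G" for x
    using inj that by (simp add: k_def)
  have "dist G (k (h u)) (k (h v)) \<le> dist (graph_image h G) (h u) (h v)"
  proof (rule dist_map_le[OF _ _ G])
    show "k x \<in> verts G" if "x \<in> verts (graph_image h G)" for x
      using that k by auto
    show "k x = k y \<or> {k x, k y} \<in> edges G" if xy: "{x, y} \<in> edges (graph_image h G)" for x y
    proof -
      obtain e where e: "e \<in> edges G" "{x, y} = h ` e"
        using xy unfolding edges_graph_image by blast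
      obtain c d where cd: "e = {c, d}" "c \<in> verts G" "d \<in> verts G" "c \<noteq> d"
        by (rule graph_edgeE[OF G e(1)])
      have "{x, y} = {h c, h d}" using e(2) cd(1) by simp
      then have "{k x, k y} = {c, d}"
        using k[OF cd(2)] k[OF cd(3)] by (auto simp: doubleton_eq_iff)
      then show ?thesis using e(1) cd(1) by simp
    qed
  qed
  then show "dist G u v \<le> dist (graph_image h G) (h u) (h v)"
    using k uv by simp
qed

lemma isometric_subgraph_graph_image:
  assumes "isometric_subgraph H W" "inj_on h (verts W)"
  shows "isometric_subgraph (graph_image h H) (graph_image h W)"
proof -
  have H: "graph H" "verts H \<subseteq> verts W" "edges H \<subseteq> edges W" and W: "graph W"
    using assms(1) by (auto simp: isometric_subgraph_def subgraph_def)
  have inj: "inj_on h (verts H)"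
    using assms(2) H(2) by (rule inj_on_subset)
  show ?thesis
    unfolding isometric_subgraph_def subgraph_def
  proof (intro conjI ballI)
    fix u' v' assume "u' \<in> verts (graph_image h H)" "v' \<in> verts (graph_image h H)"
    then obtain u v where uv: "u \<in> verts H" "v \<in> verts H" "u' = h u" "v' = h v" by auto
    moreover have "u \<in> verts W" "v \<in> verts W" using uv H(2) by auto
    ultimately show "dist (graph_image h H) u' v' = dist (graph_image h W) u' v'"
      using assms(1) dist_graph_image[OF H(1) inj] dist_graph_image[OF W assms(2)]
      by (auto simp: isometric_subgraph_def)
  qed (use H W assms(2) inj in \<open>auto simp: graph_graph_image\<close>)
qed

lemma isomorphic_graph_image:
  assumes iso: "isomorphic G H" and H: "graph H" and inj: "inj_on h (verts H)"
  shows "isomorphic G (graph_image h H)"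
proof -
  obtain f where f: "graph_iso G H f" using iso by (auto simp: isomorphic_def)
  then have bij: "bij_betw f (verts G) (verts H)" by (simp add: graph_iso_def)
  have "graph_iso G (graph_image h H) (h \<circ> f)"
    unfolding graph_iso_def
  proof (intro conjI ballI)
    show "bij_betw (h \<circ> f) (verts G) (verts (graph_image h H))"
      using bij_betw_trans[OF bij inj_on_imp_bij_betw[OF inj]] by simp
    fix u v assume uv: "u \<in> verts G" "v \<in> verts G"
    then have "f u \<in> verts H" "f v \<in> verts H" using bij by (auto simp: bij_betw_def)
    then show "{u, v} \<in> edges G \<longleftrightarrow> {(h \<circ> f) u, (h \<circ> f) v} \<in> edges (graph_image h H)"
      using f uv edge_graph_image_iff[OF H inj] by (simp add: graph_iso_def)
  qed
  then show ?thesis by (auto simp: isomorphic_def)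
qed

lemma isometric_subgraph_union_graph_image:
  assumes A: "graph A" and B: "graph B" and inj: "inj_on q (verts B)"
    and g: "nonexpansive B A (verts B) g" and g_q: "\<And>b. b \<in> verts B \<Longrightarrow> q b \<in> verts A \<Longrightarrow> g b = q b"
  shows "isometric_subgraph A (graph_union A (graph_image q B))"
proof (rule isometric_subgraph_union_if_nonexpansive[OF A graph_graph_image[OF B inj]])
  define k where "k = inv_into (verts B) q"
  have k: "k (q b) = b" if "b \<in> verts B" for b
    using inj that by (simp add: k_def)
  note gB = nonexpansiveD[OF g]
  show "nonexpansive (graph_image q B) A (verts (graph_image q B)) (g \<circ> k)"
    using gB k dist_graph_image[OF B inj] by (auto simp: nonexpansive_def)
  show "(g \<circ> k) x = x" if "x \<in> verts A" "x \<in> verts (graph_image q B)" for x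
    using that k g_q by auto
qed

lemma isometric_subgraph_graph_image_union:
  assumes A: "graph A" and B: "graph B" and inj: "inj_on q (verts B)"
    and h: "nonexpansive A B (verts A) h" and q_h: "\<And>a. a \<in> verts A \<Longrightarrow> a \<in> q ` verts B \<Longrightarrow> q (h a) = a"
  shows "isometric_subgraph (graph_image q B) (graph_union A (graph_image q B))"
proof -
  note hA = nonexpansiveD[OF h]
  have "isometric_subgraph (graph_image q B) (graph_union (graph_image q B) A)"
  proof (rule isometric_subgraph_union_if_nonexpansive[OF graph_graph_image[OF B inj] A])
    show "nonexpansive A (graph_image q B) (verts A) (q \<circ> h)"
      using hA dist_graph_image[OF B inj] by (auto simp: nonexpansive_def)
    show "(q \<circ> h) x = x" if "x \<in> verts (graph_image q B)" "x \<in> verts A" for x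
      using that q_h by simp
  qed
  then show ?thesis by (simp add: graph_union_commute)
qed

lemma graph_iso_eq_graph_image:
  assumes iso: "graph_iso G H f" and G: "graph G" and H: "graph H"
  shows "H = graph_image f G"
proof (rule graph_eqI)
  have bij: "bij_betw f (verts G) (verts H)" using iso by (simp add: graph_iso_def)
  then show V: "verts H = verts (graph_image f G)" by (simp add: bij_betw_def)
  have edge_iff: "{f u, f v} \<in> edges H \<longleftrightarrow> {u, v} \<in> edges G" if "u \<in> verts G" "v \<in> verts G" for u v
    using iso that by (simp add: graph_iso_def)
  show "edges H = edges (graph_image f G)"
  proof (intro equalityI subsetI)
    fix e assume e: "e \<in> edges H"
    then obtain c d where cd: "e = {c, d}" "c \<in> verts H" "d \<in> verts H" by (rule graph_edgeE[OF H])
    moreover from cd V have "c \<in> f ` verts G" "d \<in> f ` verts G" by simp_all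
    ultimately obtain u v where uv: "u \<in> verts G" "v \<in> verts G" "e = {f u, f v}" by blast
    then have "{u, v} \<in> edges G" using edge_iff e by simp
    then show "e \<in> edges (graph_image f G)" using uv(3) by (simp only: edge_graph_image)
  next
    fix e assume "e \<in> edges (graph_image f G)"
    then obtain e' where e': "e' \<in> edges G" "e = f ` e'" by auto
    obtain u v where "e' = {u, v}" "u \<in> verts G" "v \<in> verts G" "u \<noteq> v"
      by (rule graph_edgeE[OF G e'(1)])
    then show "e \<in> edges H" using e' edge_iff by simp
  qed
qed

lemma tree_graph_image:
  assumes T: "tree T" and inj: "inj_on h (verts T)"
  shows "tree (graph_image h T)"
proof -
  have G: "graph T" "connected T" "verts T \<noteq> {}" and acyclic: "\<nexists>xs. cycle T xs"
    using T by (auto simp: tree_def)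
  let ?H = "graph_image h T"
  have "connected ?H"
    using G(2) dist_graph_image[OF G(1) inj] by (auto simp: connected_def)
  moreover have "\<nexists>xs. cycle ?H xs"
  proof
    assume "\<exists>xs. cycle ?H xs"
    then obtain xs where xs: "cycle ?H xs" ..
    define k where "k = inv_into (verts T) h"
    have set_xs: "set xs \<subseteq> h ` verts T" using xs by (auto simp: cycle_def walk_def)
    have hk: "h (k z) = z" "k z \<in> verts T" if "z \<in> set xs" for z
      using set_xs that by (auto simp: k_def f_inv_into_f inv_into_into)
    have edge: "{k a, k b} \<in> edges T" if "{a, b} \<in> edges ?H" "a \<in> set xs" "b \<in> set xs" for a b
      using edge_graph_image_iff[OF G(1) inj hk(2)[OF that(2)] hk(2)[OF that(3)]] that hk by simp
    have "cycle T (map k xs)"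
      unfolding cycle_def walk_def
    proof (intro conjI allI impI)
      show "map k xs \<noteq> []" "3 \<le> length (map k xs)" using xs by (auto simp: cycle_def)
      show "set (map k xs) \<subseteq> verts T" using hk by auto
      show "distinct (map k xs)"
        using xs inj_on_inv_into[OF set_xs] by (simp add: cycle_def distinct_map k_def)
      fix i assume "Suc i < length (map k xs)"
      then show "{map k xs ! i, map k xs ! Suc i} \<in> edges T"
        using xs edge by (simp add: cycle_def walk_def)
    next
      have "xs \<noteq> []" using xs by (auto simp: cycle_def)
      then show "{last (map k xs), hd (map k xs)} \<in> edges T"
        using xs edge by (simp add: cycle_def last_map hd_map)
    qed
    then show False using acyclic by blast
  qed
  ultimately show ?thesis
    using G graph_graph_image[OF G(1) inj] by (simp add: tree_def)
qed

lemma tree_if_isomorphic: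
  assumes "tree G" "isomorphic G H" "graph H"
  shows "tree H"
proof -
  obtain f where f: "graph_iso G H f" using assms(2) by (auto simp: isomorphic_def)
  then have "inj_on f (verts G)" by (simp add: graph_iso_def bij_betw_def)
  then have "tree (graph_image f G)" by (rule tree_graph_image[OF assms(1)])
  moreover have "graph G" using assms(1) by (simp add: tree_def)
  ultimately show ?thesis using graph_iso_eq_graph_image[OF f _ assms(3)] by simp
qed

lemma isometric_universal_graph_image:
  assumes univ: "isometric_universal F W" and inj: "inj_on h (verts W)"
  shows "isometric_universal F (graph_image h W)"
  unfolding isometric_universal_def
proof (intro conjI ballI)
  have W: "graph W" using univ by (simp add: isometric_universal_def)
  then show "graph (graph_image h W)" using inj by (rule graph_graph_image)
  fix G assume "G \<in> F"
  then obtain H where H: "isometric_subgraph H W" "isomorphic G H"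
    using univ by (auto simp: isometric_universal_def)
  then have "graph H" "inj_on h (verts H)"
    using inj by (auto simp: isometric_subgraph_def subgraph_def intro: inj_on_subset)
  then show "\<exists>H'. isometric_subgraph H' (graph_image h W) \<and> isomorphic G H'"
    using isometric_subgraph_graph_image[OF H(1) inj] isomorphic_graph_image[OF H(2)] by blast
qed

text \<open>The definition of minimality only compares with graphs on \<open>nat\<close>; relabelling
  makes the comparison with universal graphs on any vertex type available.\<close>

lemma minimum_isometric_universal_card_le:
  assumes "minimum_isometric_universal F U" "isometric_universal F W"
  shows "card (verts U) \<le> card (verts W)"
proof -
  have "finite (verts W)"
    using assms(2) unfolding isometric_universal_def graph_def by blast
  then obtain h :: "_ \<Rightarrow> nat" and n where "h ` verts W = {i. i < n}" and h: "inj_on h (verts W)"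
    using finite_imp_inj_to_nat_seg by metis
  have "isometric_universal F (graph_image h W)"
    by (rule isometric_universal_graph_image[OF assms(2) h])
  moreover have "\<forall>H :: nat graph. isometric_universal F H \<longrightarrow> card (verts U) \<le> card (verts H)"
    using assms(1) by (simp add: minimum_isometric_universal_def)
  ultimately have "card (verts U) \<le> card (verts (graph_image h W))"
    by blast
  then show ?thesis using h by (simp add: card_image)
qed

text \<open>Only meaningful in connected graphs: \<open>the_enat \<infinity>\<close> is unspecified.\<close>

definition ndist :: "'a graph \<Rightarrow> 'a \<Rightarrow> 'a \<Rightarrow> nat" where
  "ndist G u v = the_enat (dist G u v)"

lemma dist_eq_ndist:
  "connected G \<Longrightarrow> u \<in> verts G \<Longrightarrow> v \<in> verts G \<Longrightarrow> dist G u v = enat (ndist G u v)"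
  unfolding connected_def ndist_def by (metis the_enat.simps less_infinityE)

lemma ndist_self [simp]: "u \<in> verts G \<Longrightarrow> ndist G u u = 0"
  by (simp add: ndist_def dist_self zero_enat_def)

lemma ndist_commute: "ndist G u v = ndist G v u"
  by (simp add: ndist_def dist_commute)

lemma ndist_eq_0_iff:
  "connected G \<Longrightarrow> u \<in> verts G \<Longrightarrow> v \<in> verts G \<Longrightarrow> ndist G u v = 0 \<longleftrightarrow> u = v"
  using dist_eq_ndist[of G u v] dist_eq_0D[of G u v] by (auto simp: zero_enat_def)

lemma ndist_triangle:
  "connected G \<Longrightarrow> u \<in> verts G \<Longrightarrow> v \<in> verts G \<Longrightarrow> w \<in> verts G \<Longrightarrow>
    ndist G u w \<le> ndist G u v + ndist G v w"
  using dist_triangle[of G u w v] dist_eq_ndist[of G] by (metis plus_enat_simps(1) enat_ord_simps(1))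

lemma ndist_eq_1_iff:
  assumes "graph G" "connected G" "u \<in> verts G" "v \<in> verts G"
  shows "ndist G u v = 1 \<longleftrightarrow> {u, v} \<in> edges G"
proof -
  have "ndist G u v \<le> 1 \<longleftrightarrow> u = v \<or> {u, v} \<in> edges G"
    using dist_le_1_iff[OF assms(1,3), of v] dist_eq_ndist[OF assms(2-4)] by (simp add: one_enat_def)
  moreover have "ndist G u v = 0 \<longleftrightarrow> u = v"
    using ndist_eq_0_iff[OF assms(2-4)] .
  moreover have "{u, v} \<in> edges G \<Longrightarrow> u \<noteq> v"
    using graph_edgeD[OF assms(1)] by blast
  ultimately show ?thesis by linarith
qed

lemma obtain_geodesic_point:
  assumes G: "connected G" and uv: "u \<in> verts G" "v \<in> verts G" and k: "k \<le> ndist G u v"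
  obtains y where "y \<in> verts G" "ndist G u y = k" "ndist G y v = ndist G u v - k"
proof -
  have "dist G u v \<noteq> \<infinity>" using dist_eq_ndist[OF G uv] by simp
  then obtain xs where xs: "walk G xs" "hd xs = u" "last xs = v" "dist G u v = enat (length xs - 1)"
    by (rule obtain_shortest_walk)
  have len: "ndist G u v = length xs - 1" using xs(4) dist_eq_ndist[OF G uv] by simp
  have ne: "xs \<noteq> []" using xs by (simp add: walk_def)
  then have kl: "k < length xs" using k len by (cases xs) auto
  define y where "y = xs ! k"
  have y: "y \<in> verts G" using xs(1) kl unfolding walk_def y_def by (meson nth_mem subsetD)
  have "hd (take (Suc k) xs) = u" using xs(2) ne by (cases xs) auto
  moreover have "last (take (Suc k) xs) = y" using kl by (simp add: y_def take_Suc_conv_app_nth)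
  ultimately have "dist G u y \<le> enat k"
    using dist_le_length[OF walk_take[OF xs(1), of "Suc k"]] kl by simp
  then have uy: "ndist G u y \<le> k" using dist_eq_ndist[OF G uv(1) y] by simp
  have "dist G y v \<le> enat (length xs - 1 - k)"
    using dist_le_length[OF walk_drop[OF xs(1) kl]] kl xs(3) ne by (simp add: hd_drop_conv_nth y_def)
  then have yv: "ndist G y v \<le> length xs - 1 - k" using dist_eq_ndist[OF G y uv(2)] by simp
  have "ndist G u v \<le> ndist G u y + ndist G y v" using ndist_triangle[OF G uv(1) y uv(2)] .
  then show ?thesis using that y uy yv len kl by simp
qed

definition between :: "'a graph \<Rightarrow> 'a \<Rightarrow> 'a \<Rightarrow> 'a \<Rightarrow> bool" where
  "between G u y v \<longleftrightarrow> ndist G u y + ndist G y v = ndist G u v"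

lemma between_commute: "between G u y v \<longleftrightarrow> between G v y u"
  unfolding between_def by (simp add: ndist_commute add.commute)

lemma between_self [simp]: "y \<in> verts G \<Longrightarrow> between G y y v"
  by (simp add: between_def)

definition leaf :: "'a graph \<Rightarrow> 'a \<Rightarrow> 'a \<Rightarrow> bool" where
  "leaf G l p \<longleftrightarrow> {l, p} \<in> edges G \<and> (\<forall>z. {l, z} \<in> edges G \<longrightarrow> z = p)"

definition delete_vertex :: "'a graph \<Rightarrow> 'a \<Rightarrow> 'a graph" where
  "delete_vertex G x = (verts G - {x}, {e \<in> edges G. x \<notin> e})"

lemma verts_delete_vertex [simp]: "verts (delete_vertex G x) = verts G - {x}"
  and edges_delete_vertex [simp]: "edges (delete_vertex G x) = {e \<in> edges G. x \<notin> e}"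
  by (simp_all add: delete_vertex_def verts_def edges_def)

lemma leafD:
  assumes "graph G" "leaf G l p"
  shows "l \<in> verts G" "p \<in> verts G" "l \<noteq> p" "{l, z} \<in> edges G \<Longrightarrow> z = p"
  using assms graph_edgeD[OF assms(1)] unfolding leaf_def by blast+

lemma subgraph_delete_vertex: "graph G \<Longrightarrow> subgraph (delete_vertex G x) G"
  unfolding subgraph_def graph_def by auto

lemma isometric_subgraph_delete_leaf:
  assumes G: "graph G" and l: "leaf G l p"
  shows "isometric_subgraph (delete_vertex G l) G"
proof (rule isometric_subgraph_if_retraction[where r = "\<lambda>x. if x = l then p else x"])
  show "subgraph (delete_vertex G l) G" by (rule subgraph_delete_vertex[OF G])
  fix x y
  assume e: "{x, y} \<in> edges G"
  then have "x = l \<Longrightarrow> y = p" "y = l \<Longrightarrow> x = p"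
    using leafD(4)[OF G l] by (auto simp: insert_commute)
  then show "(if x = l then p else x) = (if y = l then p else y) \<or>
      {if x = l then p else x, if y = l then p else y} \<in> edges (delete_vertex G l)"
    using e by auto
qed (use leafD[OF G l] in auto)

lemma ndist_delete_leaf:
  assumes "graph G" "leaf G l p" "u \<in> verts G - {l}" "v \<in> verts G - {l}"
  shows "ndist (delete_vertex G l) u v = ndist G u v"
  using isometric_subgraph_delete_leaf[OF assms(1,2)] assms(3,4)
  unfolding isometric_subgraph_def ndist_def by simp

text \<open>Every shortest walk from a leaf leaves through its neighbour.\<close>

lemma ndist_leaf:
  assumes G: "graph G" "connected G" and l: "leaf G l p" and z: "z \<in> verts G" "z \<noteq> l"
  shows "ndist G l z = ndist G p z + 1"
proof (rule antisym)
  have lp: "l \<in> verts G" "p \<in> verts G" "{l, p} \<in> edges G"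
    using leafD(1,2)[OF G(1) l] l unfolding leaf_def by blast+
  show "ndist G l z \<le> ndist G p z + 1"
    using ndist_triangle[OF G(2) lp(1,2) z(1)] ndist_eq_1_iff[OF G lp(1,2)] lp(3) by simp
  have "dist G l z \<noteq> \<infinity>" using dist_eq_ndist[OF G(2) lp(1) z(1)] by simp
  then obtain xs where xs: "walk G xs" "hd xs = l" "last xs = z" "dist G l z = enat (length xs - 1)"
    by (rule obtain_shortest_walk)
  then obtain y ys where xs_eq: "xs = l # y # ys"
    using z(2) by (cases xs rule: remdups_adj.cases) (auto simp: walk_def)
  then have "{l, y} \<in> edges G" "walk G (y # ys)"
    using xs(1) by (auto simp: walk_Cons_Cons)
  then have "y = p" "walk G (p # ys)" using leafD(4)[OF G(1) l] by auto
  then have "dist G p z \<le> enat (length ys)"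
    using dist_le_length[of G "p # ys"] xs(3) xs_eq by simp
  then show "ndist G p z + 1 \<le> ndist G l z"
    using xs(4) xs_eq dist_eq_ndist[OF G(2) lp(2) z(1)] dist_eq_ndist[OF G(2) lp(1) z(1)] by simp
qed

lemma between_delete_leaf:
  assumes "graph G" "leaf G l p" "u \<in> verts G - {l}" "y \<in> verts G - {l}" "v \<in> verts G - {l}"
  shows "between (delete_vertex G l) u y v \<longleftrightarrow> between G u y v"
  using ndist_delete_leaf[OF assms(1,2)] assms(3-5) by (simp add: between_def)

lemma between_leaf_iff:
  assumes "graph G" "connected G" "leaf G l p" "u \<in> verts G - {l}" "y \<in> verts G - {l}"
  shows "between G u y l \<longleftrightarrow> between G u y p"
proof -
  have "ndist G u l = ndist G u p + 1" "ndist G y l = ndist G y p + 1"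
    using ndist_leaf[OF assms(1-3)] assms(4,5) ndist_commute[of G _ l] ndist_commute[of G _ p]
    by auto
  then show ?thesis by (simp add: between_def)
qed

lemma leaf_not_between:
  assumes G: "graph G" "connected G" and l: "leaf G l p"
    and uv: "u \<in> verts G - {l}" "v \<in> verts G - {l}"
  shows "\<not> between G u l v"
proof
  assume "between G u l v"
  then have "ndist G p u + 1 + (ndist G p v + 1) = ndist G u v"
    using ndist_leaf[OF G l] uv ndist_commute[of G u l] by (simp add: between_def)
  moreover have "p \<in> verts G" using leafD(2)[OF G(1) l] .
  ultimately show False
    using ndist_triangle[OF G(2), of u p v] uv ndist_commute[of G u p] by simp
qed

lemma cycle_edge_mod:
  assumes "cycle G xs" "i < length xs"
  shows "{xs ! i, xs ! (Suc i mod length xs)} \<in> edges G"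
proof (cases "Suc i < length xs")
  case True
  then show ?thesis using assms(1) by (simp add: cycle_def walk_def)
next
  case False
  then have "Suc i = length xs" using assms(2) by simp
  then have i: "i = length xs - 1" "Suc i mod length xs = 0" by auto
  moreover have "xs \<noteq> []" using assms(2) by auto
  ultimately have "last xs = xs ! i" "hd xs = xs ! 0" "Suc i mod length xs = 0"
    by (simp_all add: last_conv_nth hd_conv_nth)
  then show ?thesis
    using assms(1) by (simp add: cycle_def insert_commute)
qed

text \<open>The two neighbours of a vertex on a cycle are distinct, so a leaf lies on no cycle.\<close>

lemma leaf_notin_cycle:
  assumes G: "graph G" and l: "leaf G l p" and xs: "cycle G xs"
  shows "l \<notin> set xs"
proof
  assume "l \<in> set xs"
  then obtain i where i: "i < length xs" "xs ! i = l" by (auto simp: in_set_conv_nth)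
  define n where "n = length xs"
  have n: "3 \<le> n" "distinct xs" using xs by (auto simp: cycle_def n_def)
  define j where "j = (if i = 0 then n - 1 else i - 1)"
  have j: "j < n" "Suc j mod n = i" using i n by (auto simp: j_def n_def)
  have "{l, xs ! (Suc i mod n)} \<in> edges G" "{l, xs ! j} \<in> edges G"
    using cycle_edge_mod[OF xs i(1)] cycle_edge_mod[OF xs j(1)[unfolded n_def]] i j
    by (simp_all add: n_def insert_commute)
  then have "xs ! (Suc i mod n) = p" "xs ! j = p"
    using leafD(4)[OF G l] by blast+
  moreover have "Suc i mod n \<noteq> j" "Suc i mod n < n"
    using i n by (auto simp: j_def n_def mod_Suc)
  ultimately show False
    using nth_eq_iff_index_eq[OF n(2), of "Suc i mod n" j] j(1) by (simp add: n_def)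
qed

lemma cycle_delete_vertex: "cycle G xs \<Longrightarrow> x \<notin> set xs \<Longrightarrow> cycle (delete_vertex G x) xs"
  unfolding cycle_def walk_def by (auto dest: nth_mem)

lemma connected_delete_leaf_iff:
  assumes G: "graph G" and l: "leaf G l p"
  shows "connected (delete_vertex G l) \<longleftrightarrow> connected G"
proof -
  let ?G' = "delete_vertex G l"
  have lp: "l \<in> verts G" "p \<in> verts G" "l \<noteq> p" "{l, p} \<in> edges G"
    using leafD(1-3)[OF G l] l unfolding leaf_def by blast+
  have dist_eq: "dist ?G' u v = dist G u v" if "u \<in> verts ?G'" "v \<in> verts ?G'" for u v
    using isometric_subgraph_delete_leaf[OF G l] that by (simp add: isometric_subgraph_def)
  have "connected G" if c': "connected ?G'"
    unfolding connected_def
  proof (intro ballI)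
    have fin: "dist G u v < \<infinity>" if "u \<in> verts ?G'" "v \<in> verts ?G'" for u v
      using c' that dist_eq by (simp add: connected_def)
    have fin_l: "dist G l v < \<infinity>" if "v \<in> verts G" for v
    proof (cases "v = l")
      case False
      have "dist G l p \<le> 1" using dist_le_1_iff[OF G lp(1)] lp(4) by blast
      then have "dist G l p \<noteq> \<infinity>" by (metis infinity_ileE one_enat_def)
      moreover have "dist G p v \<noteq> \<infinity>" using fin[of p v] lp(2,3) that False by auto
      ultimately obtain a b where "dist G l p = enat a" "dist G p v = enat b" by auto
      then have "dist G l v \<le> enat (a + b)" using dist_triangle[of G l v p] by simp
      then show ?thesis using le_less_trans[of _ "enat (a + b)" \<infinity>] by simp
    qed (use dist_self[OF lp(1)] in \<open>simp add: zero_enat_def\<close>)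
    fix u v assume uv: "u \<in> verts G" "v \<in> verts G"
    consider "u = l" | "v = l" | "u \<in> verts ?G'" "v \<in> verts ?G'" using uv by auto
    then show "dist G u v < \<infinity>"
    proof cases
      case 1
      then show ?thesis using fin_l[OF uv(2)] by simp
    next
      case 2
      then show ?thesis using fin_l[OF uv(1)] dist_commute[of G u v] by simp
    qed (rule fin)
  qed
  moreover have "connected ?G'" if "connected G"
    using that dist_eq by (simp add: connected_def)
  ultimately show ?thesis by blast
qed

lemma cycle_delete_leaf_iff:
  assumes G: "graph G" and l: "leaf G l p"
  shows "(\<exists>xs. cycle (delete_vertex G l) xs) \<longleftrightarrow> (\<exists>xs. cycle G xs)"
proof
  have sub: "verts (delete_vertex G l) \<subseteq> verts G" "edges (delete_vertex G l) \<subseteq> edges G" by auto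
  assume "\<exists>xs. cycle (delete_vertex G l) xs"
  then obtain xs where "cycle (delete_vertex G l) xs" ..
  then have "cycle G xs" using walk_mono[OF sub] sub(2) by (auto simp: cycle_def)
  then show "\<exists>xs. cycle G xs" ..
next
  assume "\<exists>xs. cycle G xs"
  then obtain xs where xs: "cycle G xs" ..
  then have "l \<notin> set xs" by (rule leaf_notin_cycle[OF G l])
  with xs have "cycle (delete_vertex G l) xs" by (rule cycle_delete_vertex)
  then show "\<exists>xs. cycle (delete_vertex G l) xs" ..
qed

lemma tree_delete_leaf_iff:
  assumes G: "graph G" and l: "leaf G l p"
  shows "tree (delete_vertex G l) \<longleftrightarrow> tree G"
proof -
  have "graph (delete_vertex G l)" using subgraph_delete_vertex[OF G] by (simp add: subgraph_def)
  moreover have "p \<in> verts (delete_vertex G l)" using leafD(2,3)[OF G l] by simp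
  ultimately show ?thesis
    using G connected_delete_leaf_iff[OF G l] cycle_delete_leaf_iff[OF G l] by (auto simp: tree_def)
qed

text \<open>A further neighbour of the end of a non-extendable path would close a cycle.\<close>

lemma leaf_last_if_maximal_path:
  assumes G: "graph G" and acyclic: "\<nexists>xs. cycle G xs"
    and xs: "walk G xs" "distinct xs" "2 \<le> length xs"
    and maximal: "\<And>z. {last xs, z} \<in> edges G \<Longrightarrow> z \<in> set xs"
  shows "leaf G (last xs) (xs ! (length xs - 2))"
proof -
  define n where "n = length xs"
  define l where "l = xs ! (n - 1)"
  define p where "p = xs ! (n - 2)"
  have "xs \<noteq> []" using xs(3) by (cases xs) auto
  then have l_last: "last xs = l" by (simp add: l_def n_def last_conv_nth)
  have "Suc (n - 2) < length xs" "Suc (n - 2) = n - 1" using xs(3) by (auto simp: n_def)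
  then have "{p, l} \<in> edges G" using xs(1) unfolding walk_def p_def l_def by metis
  then have "{l, p} \<in> edges G" by (simp add: insert_commute)
  moreover have "z = p" if lz: "{l, z} \<in> edges G" for z
  proof -
    obtain j where j: "j < n" "xs ! j = z"
      using maximal lz l_last by (auto simp: in_set_conv_nth n_def)
    have "j \<noteq> n - 1" using j graph_edgeD[OF G lz] by (auto simp: l_def)
    show ?thesis
    proof (rule ccontr)
      assume "z \<noteq> p"
      then have "j \<noteq> n - 2" using j by (auto simp: p_def)
      then have "j < n - 2" using j \<open>j \<noteq> n - 1\<close> by linarith
      have "last (drop j xs) = l" "hd (drop j xs) = z"
        using j l_last by (auto simp: n_def hd_drop_conv_nth)
      then have "cycle G (drop j xs)"
        using xs(2) \<open>j < n - 2\<close> walk_drop[OF xs(1), of j] lz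
        by (auto simp: cycle_def n_def)
      then show False using acyclic by blast
    qed
  qed
  ultimately show ?thesis unfolding leaf_def l_last p_def n_def by blast
qed

lemma obtain_leaf:
  assumes G: "graph G" and acyclic: "\<nexists>xs. cycle G xs" and e: "{u, v} \<in> edges G"
  obtains l p where "leaf G l p"
proof -
  define path where "path xs \<longleftrightarrow> walk G xs \<and> distinct xs \<and> 2 \<le> length xs" for xs
  have "path [u, v]"
    using e graph_edgeD[OF G e] by (auto simp: path_def walk_Cons_Cons)
  moreover have "\<forall>xs. path xs \<longrightarrow> length xs < Suc (card (verts G))"
  proof (intro allI impI)
    fix xs assume "path xs"
    then have "set xs \<subseteq> verts G" "distinct xs" by (auto simp: path_def walk_def)
    moreover have "finite (verts G)" using G by (simp add: graph_def)
    ultimately have "card (set xs) \<le> card (verts G)" "length xs = card (set xs)"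
      by (metis card_mono, metis distinct_card)
    then show "length xs < Suc (card (verts G))" by simp
  qed
  ultimately obtain xs where xs: "path xs" and longest: "\<forall>ys. path ys \<longrightarrow> length ys \<le> length xs"
    using ex_has_greatest_nat[of path "[u, v]" length] by blast
  have "z \<in> set xs" if lz: "{last xs, z} \<in> edges G" for z
  proof (rule ccontr)
    assume "z \<notin> set xs"
    have "walk G [last xs, z]" using lz graph_edgeD[OF G lz] by (simp add: walk_Cons_Cons)
    then have "walk G (xs @ [z])" using walk_append[of G xs "[last xs, z]"] xs by (simp add: path_def)
    then have "path (xs @ [z])" using xs \<open>z \<notin> set xs\<close> by (simp add: path_def)
    then show False using longest by fastforce
  qed
  then have "leaf G (last xs) (xs ! (length xs - 2))"
    using leaf_last_if_maximal_path[OF G acyclic] xs by (simp add: path_def)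
  then show ?thesis by (rule that)
qed

lemma tree_induct [consumes 1, case_names single leaf]:
  assumes "tree T"
    and single: "\<And>T v. tree T \<Longrightarrow> verts T = {v} \<Longrightarrow> P T"
    and leaf: "\<And>T l p. tree T \<Longrightarrow> leaf T l p \<Longrightarrow> P (delete_vertex T l) \<Longrightarrow> P T"
  shows "P T"
  using assms(1)
proof (induction "card (verts T)" arbitrary: T rule: less_induct)
  case less
  have T: "graph T" "connected T" "finite (verts T)" "verts T \<noteq> {}" "\<nexists>xs. cycle T xs"
    using less.prems by (auto simp: tree_def graph_def)
  show ?case
  proof (cases "card (verts T) = 1")
    case True
    then show ?thesis by (elim card_1_singletonE) (rule single[OF less.prems])
  next
    case False
    have "card (verts T) \<noteq> 0" using T(3,4) by simp
    then have "\<not> card (verts T) \<le> Suc 0" using False by simp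
    then obtain u v where uv: "u \<in> verts T" "v \<in> verts T" "u \<noteq> v"
      using card_le_Suc0_iff_eq[OF T(3)] by blast
    then have "1 \<le> ndist T u v" using ndist_eq_0_iff[OF T(2) uv(1,2)] by simp
    then obtain w where "w \<in> verts T" "ndist T u w = 1" "ndist T w v = ndist T u v - 1"
      by (rule obtain_geodesic_point[OF T(2) uv(1,2)])
    then have "{u, w} \<in> edges T" using ndist_eq_1_iff[OF T(1,2) uv(1)] by simp
    then obtain l p where lp: "leaf T l p" by (rule obtain_leaf[OF T(1,5)])
    have "l \<in> verts T" using leafD(1)[OF T(1) lp] .
    then have "card (verts (delete_vertex T l)) < card (verts T)"
      using T(3) card_Diff1_less[OF T(3)] by simp
    moreover have "tree (delete_vertex T l)"
      using tree_delete_leaf_iff[OF T(1) lp] less.prems by simp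
    ultimately show ?thesis by (rule leaf[OF less.prems lp less.hyps])
  qed
qed

lemma graph_union_delete_vertex:
  assumes "graph A" "x \<notin> verts A"
  shows "delete_vertex (graph_union A B) x = graph_union A (delete_vertex B x)"
proof (rule graph_eqI)
  have "x \<notin> e" if "e \<in> edges A" for e
    using assms that by (auto simp: graph_def)
  then show "edges (delete_vertex (graph_union A B) x) = edges (graph_union A (delete_vertex B x))"
    by auto
qed (use assms(2) in auto)

lemma leaf_graph_union:
  assumes "graph A" "x \<notin> verts A" "leaf B x w"
  shows "leaf (graph_union A B) x w"
proof -
  have "{x, z} \<notin> edges A" for z using graph_edgeD[OF assms(1)] assms(2) by blast
  then show ?thesis using assms(3) by (simp add: leaf_def)
qed

section \<open>Metric properties of trees\<close>

text \<open>The geodesics of a tree between any three vertices meet in a common vertex.\<close>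

lemma tree_between_split:
  assumes "tree T" "u \<in> verts T" "v \<in> verts T" "y \<in> verts T" "a \<in> verts T"
    and "between T u y v"
  shows "between T u y a \<or> between T v y a"
  using assms
proof (induction T arbitrary: u v y a rule: tree_induct)
  case (single T w)
  then show ?case by simp
next
  case (leaf T l p)
  have T: "graph T" "connected T" using leaf.hyps(1) by (auto simp: tree_def)
  have p: "p \<in> verts T" "p \<noteq> l" using leafD[OF T(1) leaf.hyps(2)] by simp_all
  show ?case
  proof (cases "y = l")
    case True
    then have "u = l \<or> v = l"
      using leaf_not_between[OF T leaf.hyps(2), of u v] leaf.prems by blast
    then show ?thesis using True between_self[of l T a] leaf.prems(3) by auto
  next
    case y: False
    \<comment> \<open>moving an end point from the leaf to its neighbour keeps \<open>y\<close> in between\<close>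
    define \<sigma> where "\<sigma> w = (if w = l then p else w)" for w
    have \<sigma>: "\<sigma> w \<in> verts T - {l}" if "w \<in> verts T" for w
      using that p by (simp add: \<sigma>_def)
    have to_p: "between T z y l \<longleftrightarrow> between T z y p" if "z \<in> verts T - {l}" for z
      using between_leaf_iff[OF T leaf.hyps(2) that] y leaf.prems(3) by simp
    have to_\<sigma>: "between T w y w' \<longleftrightarrow> between T (\<sigma> w) y (\<sigma> w')"
      if "w \<in> verts T" "w' \<in> verts T" "w \<noteq> l \<or> w' \<noteq> l" for w w'
      using that to_p[of w] to_p[of w'] between_commute[of T l y w'] between_commute[of T p y w']
      by (cases "w = l"; cases "w' = l") (simp_all add: \<sigma>_def)
    have l: "l \<in> verts T" using leafD(1)[OF T(1) leaf.hyps(2)] .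
    have "u \<noteq> l \<or> v \<noteq> l"
    proof (rule ccontr)
      assume "\<not> (u \<noteq> l \<or> v \<noteq> l)"
      then have "ndist T y l = 0" using leaf.prems(5) l by (simp add: between_def)
      then show False using ndist_eq_0_iff[OF T(2) leaf.prems(3) l] y by simp
    qed
    then have "between (delete_vertex T l) (\<sigma> u) y (\<sigma> v)"
      using to_\<sigma> between_delete_leaf[OF T(1) leaf.hyps(2)] \<sigma> leaf.prems y by simp
    then have "between (delete_vertex T l) (\<sigma> u) y (\<sigma> a) \<or> between (delete_vertex T l) (\<sigma> v) y (\<sigma> a)"
      using leaf.IH[of "\<sigma> u" "\<sigma> v" y "\<sigma> a"] \<sigma> leaf.prems y by simp
    then have "between T (\<sigma> u) y (\<sigma> a) \<or> between T (\<sigma> v) y (\<sigma> a)"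
      using between_delete_leaf[OF T(1) leaf.hyps(2)] \<sigma> leaf.prems y by simp
    then show ?thesis
      using to_\<sigma>[of u a] to_\<sigma>[of v a] leaf.prems between_commute[of T u y v] by (cases "a = l") auto
  qed
qed

lemma tree_parent_unique:
  assumes T: "tree T" and a: "a \<in> verts T"
    and e: "{x, w1} \<in> edges T" "{x, w2} \<in> edges T"
    and d: "ndist T a w1 + 1 = ndist T a x" "ndist T a w2 + 1 = ndist T a x"
  shows "w1 = w2"
proof -
  have G: "graph T" "connected T" using T by (auto simp: tree_def)
  have v: "x \<in> verts T" "w1 \<in> verts T" "w2 \<in> verts T"
    using graph_edgeD[OF G(1) e(1)] graph_edgeD[OF G(1) e(2)] by auto
  have one: "ndist T x w1 = 1" "ndist T x w2 = 1"
    using ndist_eq_1_iff[OF G v(1)] v e by auto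
  then have "between T x w1 a"
    using d(1) ndist_commute[of T a] by (simp add: between_def)
  then have "between T x w1 w2 \<or> between T a w1 w2"
    by (rule tree_between_split[OF T v(1) a v(2,3)])
  then have "ndist T w1 w2 = 0"
    using one d by (auto simp: between_def)
  then show ?thesis using ndist_eq_0_iff[OF G(2) v(2,3)] by simp
qed

text \<open>Otherwise the neighbour of \<open>x\<close> towards \<open>a\<close> would close a triangle with \<open>x\<close> and \<open>w\<close>.\<close>

lemma tree_ndist_edge:
  assumes T: "tree T" and a: "a \<in> verts T" and e: "{x, w} \<in> edges T"
  shows "ndist T a w = ndist T a x + 1 \<or> ndist T a x = ndist T a w + 1"
proof (rule ccontr)
  assume neq: "\<not> ?thesis"
  have G: "graph T" "connected T" and acyclic: "\<nexists>xs. cycle T xs" using T by (auto simp: tree_def)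
  have v: "x \<in> verts T" "w \<in> verts T" "x \<noteq> w" using graph_edgeD[OF G(1) e] by auto
  have "ndist T x w = 1" using ndist_eq_1_iff[OF G v(1,2)] e by simp
  then have "ndist T a w \<le> ndist T a x + 1" "ndist T a x \<le> ndist T a w + 1"
    using ndist_triangle[OF G(2) a v(1,2)] ndist_triangle[OF G(2) a v(2,1)] ndist_commute[of T x w]
    by auto
  then have same: "ndist T a w = ndist T a x" using neq by linarith
  have "ndist T a x \<noteq> 0"
    using same ndist_eq_0_iff[OF G(2) a] v by auto
  then obtain q where q: "q \<in> verts T" "ndist T a q = ndist T a x - 1" "ndist T q x = 1"
    using obtain_geodesic_point[OF G(2) a v(1), of "ndist T a x - 1"] by auto
  then have "between T a q x" using \<open>ndist T a x \<noteq> 0\<close> by (simp add: between_def)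
  then have "between T a q w \<or> between T x q w"
    by (rule tree_between_split[OF T a v(1) q(1) v(2)])
  moreover have "\<not> between T x q w"
  proof
    assume "between T x q w"
    then have "ndist T q w = 0"
      using q(3) \<open>ndist T x w = 1\<close> ndist_commute[of T x q] by (simp add: between_def)
    then show False using ndist_eq_0_iff[OF G(2) q(1) v(2)] q(2) same \<open>ndist T a x \<noteq> 0\<close> by simp
  qed
  ultimately have "ndist T q w = 1" using q(2) same \<open>ndist T a x \<noteq> 0\<close> by (simp add: between_def)
  moreover have "ndist T w q = 1" using \<open>ndist T q w = 1\<close> ndist_commute[of T w q] by simp
  ultimately have "{q, x} \<in> edges T" "{w, q} \<in> edges T" "q \<noteq> x" "q \<noteq> w"
    using ndist_eq_1_iff[OF G q(1) v(1)] ndist_eq_1_iff[OF G v(2) q(1)] q(1,3) by auto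
  then have "cycle T [q, x, w]"
    using e v q(1) by (auto simp: cycle_def walk_Cons_Cons)
  then show False using acyclic by blast
qed

lemma tree_ndist_profile:
  assumes T: "tree T" and v: "a \<in> verts T" "y \<in> verts T" "w \<in> verts T" "b \<in> verts T"
    and "between T a y w"
  shows "int (ndist T y b) = max (int (ndist T a b) - int (ndist T a y)) (int (ndist T w b) - int (ndist T y w))"
proof -
  have c: "connected T" using T by (simp add: tree_def)
  have "between T a y b \<or> between T w y b"
    using tree_between_split[OF T v(1,3,2,4)] assms(6) .
  moreover have "ndist T a b \<le> ndist T a y + ndist T y b" "ndist T w b \<le> ndist T w y + ndist T y b"
    using ndist_triangle[OF c v(1,2,4)] ndist_triangle[OF c v(3,2,4)] .
  ultimately show ?thesis by (auto simp: between_def ndist_commute[of T w y])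
qed

text \<open>Balls centred at a leaf are replaced by balls of one smaller radius around its
  neighbour: off the leaf they are the same sets, and they still pairwise intersect.\<close>

lemma balls_delete_leaf:
  assumes T: "graph T" "connected T" and l: "leaf T l p"
    and c: "\<forall>i\<in>A. c i \<in> verts T" and r: "\<forall>i\<in>A. c i = l \<longrightarrow> r i \<noteq> 0"
    and pairwise: "\<forall>i\<in>A. \<forall>j\<in>A. ndist T (c i) (c j) \<le> r i + r j"
  defines "c' \<equiv> \<lambda>i. if c i = l then p else c i" and "r' \<equiv> \<lambda>i. if c i = l then r i - 1 else r i"
  shows "\<forall>i\<in>A. c' i \<in> verts (delete_vertex T l)"
    and "\<And>i z. i \<in> A \<Longrightarrow> z \<in> verts T - {l} \<Longrightarrow>
      ndist T (c i) z \<le> r i \<longleftrightarrow> ndist (delete_vertex T l) (c' i) z \<le> r' i"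
    and "\<forall>i\<in>A. \<forall>j\<in>A. ndist (delete_vertex T l) (c' i) (c' j) \<le> r' i + r' j"
proof -
  have p: "p \<in> verts T" "p \<noteq> l" using leafD[OF T(1) l] by auto
  show "\<forall>i\<in>A. c' i \<in> verts (delete_vertex T l)" using c p by (auto simp: c'_def)
  then have c': "\<forall>i\<in>A. c' i \<in> verts T - {l}" by simp
  have shift: "ndist T (c i) z = ndist T (c' i) z + (r i - r' i)" "r' i + (r i - r' i) = r i"
    if "i \<in> A" "z \<in> verts T - {l}" for i z
    using ndist_leaf[OF T l] that c r by (auto simp: c'_def r'_def)
  then show "ndist T (c i) z \<le> r i \<longleftrightarrow> ndist (delete_vertex T l) (c' i) z \<le> r' i"
    if "i \<in> A" "z \<in> verts T - {l}" for i z
    using ndist_delete_leaf[OF T(1) l] c' that by (metis add_le_cancel_right)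
  have one_moved: "ndist T (c' i) (c' j) \<le> r' i + r' j" if ij: "i \<in> A" "j \<in> A" "c j \<noteq> l" for i j
  proof -
    have "c' j = c j" "r' j = r j" using ij(3) by (simp_all add: c'_def r'_def)
    moreover have "ndist T (c i) (c j) \<le> r i + r j" using pairwise ij by blast
    moreover have "c j \<in> verts T - {l}" using c ij by auto
    ultimately show ?thesis using shift[OF ij(1)] by fastforce
  qed
  have "ndist T (c' i) (c' j) \<le> r' i + r' j" if ij: "i \<in> A" "j \<in> A" for i j
  proof (cases "c i = l \<and> c j = l")
    case True
    then show ?thesis using p by (simp add: c'_def)
  next
    case False
    then show ?thesis
      using one_moved[OF ij] one_moved[OF ij(2,1)] ndist_commute[of T "c' i"] by (auto simp: add.commute)
  qed
  then show "\<forall>i\<in>A. \<forall>j\<in>A. ndist (delete_vertex T l) (c' i) (c' j) \<le> r' i + r' j"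
    using ndist_delete_leaf[OF T(1) l] c' by simp
qed

lemma tree_Helly:
  assumes "tree T"
    and "\<forall>i\<in>A. c i \<in> verts T"
    and "\<forall>i\<in>A. \<forall>j\<in>A. ndist T (c i) (c j) \<le> r i + r j"
  shows "\<exists>y\<in>verts T. \<forall>i\<in>A. ndist T (c i) y \<le> r i"
  using assms
proof (induction T arbitrary: c r rule: tree_induct)
  case (single T v)
  then show ?case by auto
next
  case (leaf T l p)
  have T: "graph T" "connected T" using leaf.hyps(1) by (auto simp: tree_def)
  show ?case
  proof (cases "\<exists>i\<in>A. c i = l \<and> r i = 0")
    case True
    then obtain i where i: "i \<in> A" "c i = l" "r i = 0" by blast
    have "ndist T (c j) l \<le> r j" if "j \<in> A" for j
      using bspec[OF bspec[OF leaf.prems(2) that] i(1)] i by simp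
    then show ?thesis using leafD(1)[OF T(1) leaf.hyps(2)] by blast
  next
    case False
    then have "\<forall>i\<in>A. c i = l \<longrightarrow> r i \<noteq> 0" by simp
    note moved = balls_delete_leaf[OF T leaf.hyps(2) leaf.prems(1) this leaf.prems(2)]
    obtain y where "y \<in> verts (delete_vertex T l)"
      and y: "\<forall>i\<in>A. ndist (delete_vertex T l) (if c i = l then p else c i) y \<le> (if c i = l then r i - 1 else r i)"
      using leaf.IH[OF moved(1,3)] by (rule bexE)
    then have "y \<in> verts T - {l}" by simp
    then have "ndist T (c i) y \<le> r i" if "i \<in> A" for i
      using moved(2)[OF that] y that by simp
    then show ?thesis using \<open>y \<in> verts T - {l}\<close> by blast
  qed
qed

lemma nonexpansive_ndist_iff:
  assumes "connected G" "connected H" "A \<subseteq> verts G"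
  shows "nonexpansive G H A f \<longleftrightarrow>
    f ` A \<subseteq> verts H \<and> (\<forall>x\<in>A. \<forall>y\<in>A. ndist H (f x) (f y) \<le> ndist G x y)"
proof -
  have "dist H (f x) (f y) \<le> dist G x y \<longleftrightarrow> ndist H (f x) (f y) \<le> ndist G x y"
    if "f ` A \<subseteq> verts H" "x \<in> A" "y \<in> A" for x y
  proof -
    have "x \<in> verts G" "y \<in> verts G" "f x \<in> verts H" "f y \<in> verts H"
      using that assms(3) by auto
    then show ?thesis using dist_eq_ndist[OF assms(1)] dist_eq_ndist[OF assms(2)] by simp
  qed
  then show ?thesis unfolding nonexpansive_def by auto
qed

text \<open>The balls of radius \<open>ndist G a x\<close> around the images \<open>f a\<close> pairwise intersect, so by
  the Helly property a common point can serve as image of \<open>x\<close>.\<close>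

lemma tree_extend_nonexpansive_point:
  assumes G: "connected G" and T: "tree T" and A: "A \<subseteq> verts G" and x: "x \<in> verts G"
    and f: "nonexpansive G T A f"
  obtains y where "nonexpansive G T (insert x A) (f(x := y))"
proof -
  have T': "connected T" using T by (simp add: tree_def)
  note ndist_iff = nonexpansive_ndist_iff[OF G T']
  have fA: "\<forall>a\<in>A. f a \<in> verts T" and f_le: "\<forall>a\<in>A. \<forall>b\<in>A. ndist T (f a) (f b) \<le> ndist G a b"
    using f ndist_iff[OF A] by auto
  have "\<forall>a\<in>A. \<forall>b\<in>A. ndist T (f a) (f b) \<le> ndist G a x + ndist G b x"
  proof (intro ballI)
    fix a b assume ab: "a \<in> A" "b \<in> A"
    have "ndist G a b \<le> ndist G a x + ndist G x b"
      using A ab by (intro ndist_triangle[OF G _ x]) auto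
    moreover have "ndist T (f a) (f b) \<le> ndist G a b" using f_le ab by blast
    ultimately show "ndist T (f a) (f b) \<le> ndist G a x + ndist G b x"
      using ndist_commute[of G x b] by simp
  qed
  then obtain y where y: "y \<in> verts T" "\<forall>a\<in>A. ndist T (f a) y \<le> ndist G a x"
    using tree_Helly[OF T fA, of "\<lambda>a. ndist G a x"] by blast
  have "nonexpansive G T (insert x A) (f(x := y))"
    unfolding ndist_iff[OF insert_subsetI[OF x A]]
  proof (intro conjI ballI)
    show "(f(x := y)) ` insert x A \<subseteq> verts T" using fA y(1) by auto
    have to_x: "ndist T (f a) y \<le> ndist G a x" "ndist T y (f a) \<le> ndist G x a"
      if "a \<in> A" for a
      using y(2) that ndist_commute[of T y "f a"] ndist_commute[of G x a] by auto
    fix a b assume "a \<in> insert x A" "b \<in> insert x A"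
    then consider "a = x" "b = x" | "a = x" "b \<noteq> x" "b \<in> A" | "a \<noteq> x" "b = x" "a \<in> A"
      | "a \<noteq> x" "b \<noteq> x" "a \<in> A" "b \<in> A" by auto
    then show "ndist T ((f(x := y)) a) ((f(x := y)) b) \<le> ndist G a b"
      by cases (use f_le to_x y(1) in simp_all)
  qed
  then show ?thesis by (rule that)
qed

lemma tree_nonexpansive_extension:
  assumes G: "graph G" "connected G" and T: "tree T"
  shows "A \<subseteq> verts G \<Longrightarrow> nonexpansive G T A f \<Longrightarrow>
    \<exists>g. nonexpansive G T (verts G) g \<and> (\<forall>a\<in>A. g a = f a)"
proof (induction "card (verts G - A)" arbitrary: A f)
  case 0
  then have "A = verts G" using G(1) by (auto simp: graph_def)
  then show ?case using "0.prems" by blast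
next
  case (Suc n)
  have "verts G - A \<noteq> {}" using Suc.hyps(2) by (cases "verts G - A = {}") auto
  then obtain x where x: "x \<in> verts G" "x \<notin> A" by blast
  obtain y where "nonexpansive G T (insert x A) (f(x := y))"
    using tree_extend_nonexpansive_point[OF G(2) T Suc.prems(1) x(1) Suc.prems(2)] by blast
  moreover have "n = card (verts G - insert x A)"
  proof -
    have "finite (verts G)" using G(1) by (simp add: graph_def)
    then have "card (verts G - A - {x}) = card (verts G - A) - 1"
      using x by (intro card_Diff_singleton) auto
    then show ?thesis using Suc.hyps(2) by (simp add: Diff_insert[symmetric] insert_commute)
  qed
  ultimately obtain g where "nonexpansive G T (verts G) g" "\<forall>a\<in>insert x A. g a = (f(x := y)) a"
    using Suc.hyps(1) Suc.prems(1) x(1) by blast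
  then show ?case using x(2) by auto
qed

section \<open>Two trees glued along a common part\<close>

definition twins :: "'a graph \<Rightarrow> 'a graph \<Rightarrow> 'a \<Rightarrow> 'a \<Rightarrow> bool" where
  "twins A B y x \<longleftrightarrow> y \<in> verts A - verts B \<and> x \<in> verts B - verts A \<and>
     (\<forall>b\<in>verts A \<inter> verts B. dist A y b = dist B x b)"

lemma twins_commute: "twins A B y x \<longleftrightarrow> twins B A x y"
  unfolding twins_def by auto

text \<open>The twin is the vertex at the position of \<open>x\<close> on the geodesic from \<open>a\<close> to \<open>z\<close> in \<open>A\<close>:
  in a tree, distances from an interior point of a geodesic are determined by the distances
  from its ends.\<close>

lemma obtain_twin:
  assumes A: "tree A" and B: "tree B"
    and agree: "\<And>u v. u \<in> verts A \<inter> verts B \<Longrightarrow> v \<in> verts A \<inter> verts B \<Longrightarrow> dist A u v = dist B u v"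
    and a: "a \<in> verts A \<inter> verts B" and z: "z \<in> verts A \<inter> verts B" and x: "x \<in> verts B - verts A"
    and xz: "ndist B x z = 1" and axz: "between B a x z"
  obtains y where "twins A B y x"
proof -
  have cA: "connected A" and cB: "connected B" using A B by (auto simp: tree_def)
  have agree': "ndist A u v = ndist B u v" if "u \<in> verts A \<inter> verts B" "v \<in> verts A \<inter> verts B" for u v
    using agree[OF that] that by (simp add: ndist_def)
  define s where "s = ndist B a x"
  have "ndist A a z = s + 1" using agree'[OF a z] axz xz by (simp add: between_def s_def)
  then obtain y where y: "y \<in> verts A" "ndist A a y = s" "ndist A y z = 1"
    using obtain_geodesic_point[OF cA _ _, of a z s] a z by auto
  have same: "ndist A y b = ndist B x b" if b: "b \<in> verts A \<inter> verts B" for b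
  proof -
    have "int (ndist A y b) = max (int (ndist A a b) - int s) (int (ndist A z b) - 1)"
      using tree_ndist_profile[OF A _ y(1) _ _, of a z b] a z b y \<open>ndist A a z = s + 1\<close>
      by (simp add: between_def)
    also have "\<dots> = int (ndist B x b)"
      using tree_ndist_profile[OF B _ _ _ _ axz] a z b x xz agree'[OF a b] agree'[OF z b]
      by (simp add: s_def)
    finally show ?thesis by simp
  qed
  have "y \<notin> verts B"
  proof
    assume "y \<in> verts B"
    then have "ndist B x y = 0" using same[of y] y(1) by simp
    then show False using ndist_eq_0_iff[OF cB, of x y] x y(1) \<open>y \<in> verts B\<close> by auto
  qed
  then have "twins A B y x"
    using x y(1) same dist_eq_ndist[OF cA y(1)] dist_eq_ndist[OF cB] by (auto simp: twins_def)
  then show ?thesis by (rule that)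
qed

text \<open>A second neighbour of \<open>x\<close> would be farther from \<open>a\<close>, hence a common vertex, and
  then \<open>x\<close> would have a twin.\<close>

lemma farthest_private_leaf:
  assumes A: "tree A" and B: "tree B"
    and agree: "\<And>u v. u \<in> verts A \<inter> verts B \<Longrightarrow> v \<in> verts A \<inter> verts B \<Longrightarrow> dist A u v = dist B u v"
    and a: "a \<in> verts A \<inter> verts B" and x: "x \<in> verts B - verts A"
    and farthest: "\<And>z. z \<in> verts B - verts A \<Longrightarrow> ndist B a z \<le> ndist B a x"
    and no_twin: "\<And>y. \<not> twins A B y x"
  obtains w where "leaf B x w"
proof -
  have G: "graph B" "connected B" using B by (auto simp: tree_def)
  have "ndist B a x \<noteq> 0" using ndist_eq_0_iff[OF G(2)] a x by auto
  then obtain w where w: "w \<in> verts B" "ndist B a w = ndist B a x - 1" "ndist B w x = 1"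
    using obtain_geodesic_point[OF G(2), of a x "ndist B a x - 1"] a x by auto
  then have e: "{x, w} \<in> edges B"
    using ndist_eq_1_iff[OF G] x ndist_commute[of B w x] by auto
  have "z = w" if z: "{x, z} \<in> edges B" for z
  proof (rule ccontr)
    assume "z \<noteq> w"
    then have "ndist B a z + 1 \<noteq> ndist B a x"
      using tree_parent_unique[OF B _ e z, of a] a w(2) \<open>ndist B a x \<noteq> 0\<close> by auto
    then have far: "ndist B a z = ndist B a x + 1"
      using tree_ndist_edge[OF B _ z, of a] a by auto
    have zB: "z \<in> verts B" using graph_edgeD[OF G(1) z] by simp
    then have "z \<in> verts A" using farthest[of z] far by fastforce
    moreover have "ndist B x z = 1" using ndist_eq_1_iff[OF G] z x zB by simp
    moreover have "between B a x z" using far \<open>ndist B x z = 1\<close> by (simp add: between_def)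
    ultimately obtain y where "twins A B y x"
      using zB obtain_twin[OF A B agree a _ x] by blast
    then show False using no_twin by blast
  qed
  then have "leaf B x w" using e unfolding leaf_def by blast
  then show ?thesis by (rule that)
qed

lemma twins_delete_vertex:
  assumes "isometric_subgraph (delete_vertex B x) B" "x \<notin> verts A" "twins A (delete_vertex B x) y z"
  shows "twins A B y z"
proof -
  have "verts A \<inter> verts (delete_vertex B x) = verts A \<inter> verts B" using assms(2) by auto
  moreover have "dist (delete_vertex B x) z b = dist B z b" if "b \<in> verts A \<inter> verts B" for b
    using assms that by (auto simp: isometric_subgraph_def twins_def)
  ultimately show ?thesis using assms(2,3) by (auto simp: twins_def)
qed

lemma graph_union_eq_left:
  assumes A: "graph A" and B: "graph B" and V: "verts B \<subseteq> verts A"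
    and agree: "\<And>u v. u \<in> verts B \<Longrightarrow> v \<in> verts B \<Longrightarrow> dist A u v = dist B u v"
  shows "graph_union A B = A"
proof -
  have "e \<in> edges A" if e: "e \<in> edges B" for e
  proof -
    obtain u v where uv: "e = {u, v}" "u \<in> verts B" "v \<in> verts B" "u \<noteq> v"
      by (rule graph_edgeE[OF B e])
    then have "dist B u v \<le> 1" using e dist_le_1_iff[OF B] by blast
    then have "dist A u v \<le> 1" using agree[OF uv(2,3)] by simp
    then show ?thesis using dist_le_1_iff[OF A, of u v] V uv by auto
  qed
  then show ?thesis by (intro graph_eqI) (use V in auto)
qed

lemma isometric_subgraphs_union_delete_leaf:
  assumes A: "graph A" and B: "graph B" and leaf: "leaf B x w"
    and iso: "isometric_subgraph A (graph_union A B)" "isometric_subgraph B (graph_union A B)"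
  shows "isometric_subgraph A (graph_union A (delete_vertex B x))"
    and "isometric_subgraph (delete_vertex B x) (graph_union A (delete_vertex B x))"
proof -
  let ?B' = "delete_vertex B x"
  have B'B: "isometric_subgraph ?B' B" by (rule isometric_subgraph_delete_leaf[OF B leaf])
  then have B': "graph ?B'" by (simp add: isometric_subgraph_def subgraph_def)
  have sub: "subgraph (graph_union A ?B') (graph_union A B)"
    using graph_graph_union[OF A B'] graph_graph_union[OF A B] by (auto simp: subgraph_def)
  show "isometric_subgraph A (graph_union A ?B')"
    using isometric_subgraph_between[OF iso(1) subgraph_graph_union[OF A B'] sub] .
  show "isometric_subgraph ?B' (graph_union A ?B')"
    using isometric_subgraph_between[OF isometric_subgraph_trans[OF B'B iso(2)] _ sub]
      subgraph_graph_union[OF B' A] graph_union_commute[of ?B' A] by simp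
qed

lemma common_vertex_if_no_twins:
  assumes "verts A \<noteq> {}" "verts B \<noteq> {}" "\<And>y x. \<not> twins A B y x"
  shows "verts A \<inter> verts B \<noteq> {}"
proof
  assume "verts A \<inter> verts B = {}"
  moreover obtain y x where "y \<in> verts A" "x \<in> verts B" using assms(1,2) by blast
  ultimately have "twins A B y x" by (auto simp: twins_def)
  then show False using assms(3) by blast
qed

text \<open>Induction on the number of vertices of \<open>B\<close> outside \<open>A\<close>: a farthest one is a leaf of
  \<open>B\<close>, and also of the union, since \<open>A\<close> does not see it.\<close>

lemma tree_graph_union:
  assumes "tree A" "tree B"
    and "isometric_subgraph A (graph_union A B)" "isometric_subgraph B (graph_union A B)"
    and "\<And>y x. \<not> twins A B y x"
  shows "tree (graph_union A B)"
  using assms(2-5)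
proof (induction "card (verts B - verts A)" arbitrary: B rule: less_induct)
  case less
  have A: "graph A" "verts A \<noteq> {}" using assms(1) by (auto simp: tree_def)
  have B: "graph B" "finite (verts B)" "verts B \<noteq> {}"
    using less.prems(1) by (auto simp: tree_def graph_def)
  note agree = dist_agree_if_isometric[OF less.prems(2,3)]
  obtain a where a: "a \<in> verts A \<inter> verts B"
    using common_vertex_if_no_twins[OF A(2) B(3) less.prems(4)] by blast
  show ?case
  proof (cases "verts B \<subseteq> verts A")
    case True
    then have "graph_union A B = A" using graph_union_eq_left[OF A(1) B(1)] agree by auto
    then show ?thesis using assms(1) by simp
  next
    case False
    define S where "S = verts B - verts A"
    have S: "finite S" "S \<noteq> {}" using B(2) False by (auto simp: S_def)
    then obtain x where x: "x \<in> S" "Max (ndist B a ` S) = ndist B a x" by (rule obtains_MAX)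
    then have "ndist B a z \<le> ndist B a x" if "z \<in> S" for z
      using S(1) that by (simp add: x(2)[symmetric])
    then obtain w where leaf: "leaf B x w"
      using farthest_private_leaf[OF assms(1) less.prems(1) agree a] x(1) less.prems(4)
      unfolding S_def by blast
    let ?B' = "delete_vertex B x"
    have x_notin: "x \<notin> verts A" using x(1) by (simp add: S_def)
    have "verts ?B' - verts A = S - {x}" by (auto simp: S_def)
    then have "card (verts ?B' - verts A) < card (verts B - verts A)"
      using card_Diff1_less[OF S(1) x(1)] by (simp add: S_def)
    moreover have "tree ?B'" using tree_delete_leaf_iff[OF B(1) leaf] less.prems(1) by simp
    moreover have "\<not> twins A ?B' y z" for y z
      using twins_delete_vertex[OF isometric_subgraph_delete_leaf[OF B(1) leaf] x_notin] less.prems(4)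
      by blast
    ultimately have "tree (graph_union A ?B')"
      using less.hyps isometric_subgraphs_union_delete_leaf[OF A(1) B(1) leaf less.prems(2,3)] by blast
    then have "tree (delete_vertex (graph_union A B) x)"
      using graph_union_delete_vertex[OF A(1) x_notin] by simp
    then show ?thesis
      using tree_delete_leaf_iff[OF graph_graph_union[OF A(1) B(1)] leaf_graph_union[OF A(1) x_notin leaf]]
      by simp
  qed
qed

lemma twins_nonexpansive:
  assumes agree: "\<And>u v. u \<in> verts A \<inter> verts B \<Longrightarrow> v \<in> verts A \<inter> verts B \<Longrightarrow> dist A u v = dist B u v"
    and tw: "twins A B y x"
  shows "nonexpansive B A (insert x (verts A \<inter> verts B)) (\<lambda>z. if z = x then y else z)"
  unfolding nonexpansive_def
proof (intro conjI ballI)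
  have y: "y \<in> verts A" "x \<notin> verts A" and same: "\<And>b. b \<in> verts A \<inter> verts B \<Longrightarrow> dist A y b = dist B x b"
    using tw by (auto simp: twins_def)
  then show "(\<lambda>z. if z = x then y else z) ` insert x (verts A \<inter> verts B) \<subseteq> verts A" by auto
  fix u v assume "u \<in> insert x (verts A \<inter> verts B)" "v \<in> insert x (verts A \<inter> verts B)"
  then consider "u = x" "v = x" | "u = x" "v \<in> verts A \<inter> verts B" | "v = x" "u \<in> verts A \<inter> verts B"
    | "u \<in> verts A \<inter> verts B" "v \<in> verts A \<inter> verts B" by blast
  then show "dist A (if u = x then y else u) (if v = x then y else v) \<le> dist B u v"
  proof cases
    case 1
    then show ?thesis using dist_self[OF y(1)] by simp
  next
    case 2
    then show ?thesis using same[of v] y(2) by auto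
  next
    case 3
    then show ?thesis using same[of u] y(2) dist_commute[of A] dist_commute[of B] by auto
  next
    case 4
    then show ?thesis using agree[of u v] y(2) by auto
  qed
qed

lemma obtain_twins_retraction:
  assumes A: "tree A" and B: "tree B"
    and agree: "\<And>u v. u \<in> verts A \<inter> verts B \<Longrightarrow> v \<in> verts A \<inter> verts B \<Longrightarrow> dist A u v = dist B u v"
    and tw: "twins A B y x"
  obtains g where "nonexpansive B A (verts B) g" "g x = y" "\<forall>b\<in>verts A \<inter> verts B. g b = b"
proof -
  have "graph B" "connected B" using B by (auto simp: tree_def)
  moreover have "insert x (verts A \<inter> verts B) \<subseteq> verts B" using tw by (auto simp: twins_def)
  ultimately obtain g where g: "nonexpansive B A (verts B) g"
    "\<forall>a\<in>insert x (verts A \<inter> verts B). g a = (if a = x then y else a)"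
    using tree_nonexpansive_extension[OF _ _ A] twins_nonexpansive[OF agree tw] by blast
  moreover have "x \<notin> verts A" using tw by (simp add: twins_def)
  ultimately show ?thesis using that by auto
qed

text \<open>The extension property of trees provides nonexpansive retractions onto either side.\<close>

lemma twins_merge:
  assumes A: "tree A" and B: "tree B"
    and agree: "\<And>u v. u \<in> verts A \<inter> verts B \<Longrightarrow> v \<in> verts A \<inter> verts B \<Longrightarrow> dist A u v = dist B u v"
    and tw: "twins A B y x"
  defines "q \<equiv> \<lambda>z. if z = x then y else z"
  shows "isometric_subgraph A (graph_union A (graph_image q B))"
    and "isometric_subgraph (graph_image q B) (graph_union A (graph_image q B))"
proof -
  have gA: "graph A" and gB: "graph B" using A B by (auto simp: tree_def)
  have xy: "x \<in> verts B" "x \<notin> verts A" "y \<in> verts A" "y \<notin> verts B" using tw by (auto simp: twins_def)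
  have inj: "inj_on q (verts B)" using xy by (auto simp: inj_on_def q_def)
  obtain g where g: "nonexpansive B A (verts B) g" "g x = y" "\<forall>b\<in>verts A \<inter> verts B. g b = b"
    by (rule obtain_twins_retraction[OF A B agree tw])
  have "g b = q b" if "b \<in> verts B" "q b \<in> verts A" for b
    using that g(2,3) by (cases "b = x") (auto simp: q_def)
  then show "isometric_subgraph A (graph_union A (graph_image q B))"
    by (rule isometric_subgraph_union_graph_image[OF gA gB inj g(1)])
  have agree': "dist B u v = dist A u v" if "u \<in> verts B \<inter> verts A" "v \<in> verts B \<inter> verts A" for u v
    using agree that by auto
  obtain h where h: "nonexpansive A B (verts A) h" "h y = x" "\<forall>b\<in>verts B \<inter> verts A. h b = b"
    by (rule obtain_twins_retraction[OF B A agree' twins_commute[THEN iffD1, OF tw]])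
  have "q (h a) = a" if "a \<in> verts A" "a \<in> q ` verts B" for a
  proof (cases "a = y")
    case False
    then have "a \<in> verts B \<inter> verts A" "a \<noteq> x" using that xy by (auto simp: q_def)
    then show ?thesis using h(3) by (simp add: q_def)
  qed (simp add: h(2) q_def)
  then show "isometric_subgraph (graph_image q B) (graph_union A (graph_image q B))"
    by (rule isometric_subgraph_graph_image_union[OF gA gB inj h(1)])
qed

section \<open>Minimal and minimum universal graphs\<close>

lemma isometric_universal_pairI:
  "graph W \<Longrightarrow> isometric_subgraph H1 W \<Longrightarrow> isomorphic T1 H1 \<Longrightarrow>
    isometric_subgraph H2 W \<Longrightarrow> isomorphic T2 H2 \<Longrightarrow> isometric_universal {T1, T2} W"
  unfolding isometric_universal_def by blast

lemma minimal_isometric_universal_eq_union: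
  assumes min: "minimal_isometric_universal {T1, T2} U"
    and H1: "isometric_subgraph H1 U" "isomorphic T1 H1"
    and H2: "isometric_subgraph H2 U" "isomorphic T2 H2"
  shows "U = graph_union H1 H2"
proof (rule ccontr)
  assume ne: "U \<noteq> graph_union H1 H2"
  have gH: "graph H1" "graph H2" using H1(1) H2(1) by (auto simp: isometric_subgraph_def subgraph_def)
  let ?H = "graph_union H1 H2"
  have sub: "subgraph ?H U"
    using H1(1) H2(1) graph_graph_union[OF gH] by (auto simp: isometric_subgraph_def subgraph_def)
  have "isometric_subgraph H1 ?H"
    by (rule isometric_subgraph_between[OF H1(1) subgraph_graph_union[OF gH] sub])
  moreover have "isometric_subgraph H2 ?H"
    using isometric_subgraph_between[OF H2(1) subgraph_graph_union[OF gH(2,1)]] sub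
    by (simp add: graph_union_commute)
  ultimately have "isometric_universal {T1, T2} ?H"
    using isometric_universal_pairI[OF graph_graph_union[OF gH]] H1(2) H2(2) by blast
  then show False using min sub ne unfolding minimal_isometric_universal_def by blast
qed

lemma minimum_isometric_universal_no_twins:
  assumes min: "minimum_isometric_universal {T1, T2} (graph_union H1 H2)"
    and trees: "tree H1" "tree H2"
    and H1: "isometric_subgraph H1 (graph_union H1 H2)" "isomorphic T1 H1"
    and H2: "isometric_subgraph H2 (graph_union H1 H2)" "isomorphic T2 H2"
  shows "\<not> twins H1 H2 y x"
proof
  assume tw: "twins H1 H2 y x"
  define q where "q z = (if z = x then y else z)" for z
  let ?W = "graph_union H1 (graph_image q H2)"
  have gH: "graph H1" "graph H2" using trees by (auto simp: tree_def)
  have xy: "x \<in> verts H2" "x \<notin> verts H1" "y \<in> verts H1" "y \<notin> verts H2"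
    using tw by (auto simp: twins_def)
  have inj: "inj_on q (verts H2)" using xy by (auto simp: inj_on_def q_def)
  note merged = twins_merge[OF trees dist_agree_if_isometric[OF H1(1) H2(1)] tw]
  have "isometric_universal {T1, T2} ?W"
    using isometric_universal_pairI[OF graph_graph_union[OF gH(1) graph_graph_image[OF gH(2) inj]]]
      merged[folded q_def] H1(2) isomorphic_graph_image[OF H2(2) gH(2) inj] by blast
  then have "card (verts (graph_union H1 H2)) \<le> card (verts ?W)"
    by (rule minimum_isometric_universal_card_le[OF min])
  moreover have "card (verts ?W) < card (verts (graph_union H1 H2))"
  proof -
    have fin: "finite (verts (graph_union H1 H2))" using gH by (simp add: graph_def)
    have "verts ?W \<subseteq> verts (graph_union H1 H2) - {x}" using xy by (auto simp: q_def)
    then have "card (verts ?W) \<le> card (verts (graph_union H1 H2) - {x})"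
      using fin by (simp add: card_mono)
    also have "\<dots> < card (verts (graph_union H1 H2))"
      using card_Diff1_less[OF fin, of x] xy(1) by simp
    finally show ?thesis .
  qed
  ultimately show False by simp
qed

theorem theorem2:
  fixes T1 T2 :: "'b graph" and U :: "'a graph"
  assumes "tree T1" and "tree T2"
    and "minimum_isometric_universal {T1, T2} U"
    and "minimal_isometric_universal {T1, T2} U"
  shows "tree U"
proof -
  have "isometric_universal {T1, T2} U"
    using assms(3) by (simp add: minimum_isometric_universal_def)
  then obtain H1 H2 where H1: "isometric_subgraph H1 U" "isomorphic T1 H1"
    and H2: "isometric_subgraph H2 U" "isomorphic T2 H2"
    unfolding isometric_universal_def by blast
  have U: "U = graph_union H1 H2"
    by (rule minimal_isometric_universal_eq_union[OF assms(4) H1 H2])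
  have "graph H1" "graph H2" using H1(1) H2(1) by (simp_all add: isometric_subgraph_def subgraph_def)
  then have trees: "tree H1" "tree H2"
    using tree_if_isomorphic assms(1,2) H1(2) H2(2) by blast+
  have "\<not> twins H1 H2 y x" for y x
    using minimum_isometric_universal_no_twins[OF _ trees] assms(3) H1 H2 U by simp
  then show "tree U"
    using tree_graph_union[OF trees] H1(1) H2(1) U by simp
qed

end
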